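(* The affine scheme $\mathscr{H}_{\mathbb{A}}^{13}\cap\{p_{121}=p_{112}=p_{211}=0,\ p_{111}=1\}$ coincides with the cluster variety $X_{\mathsf{C}_2}$ under the identification of coordinates $u_1=\theta_{12}$, $u_2=\theta_{23}$, $u_3=\theta_{31}$, $(x_{11},x_{21})=(A_{12},\theta_3)$, $(x_{12},x_{22})=(A_{23},\theta_1)$, $(x_{13},x_{23})=(A_{31},\theta_2)$, $p_{212}=-A_1$, $p_{221}=-A_2$, $p_{122}=-A_3$, $p_{222}=\lambda$ (left-hand sides are coordinates of $\mathscr{H}_{\mathbb{A}}^{13}$, right-hand sides those of $X_{\mathsf{C}_2}$).
   Context: $\mathscr{H}_{\mathbb{A}}^{13}\subset\mathbb{A}^{17}$ (coordinates $u_1,u_2,u_3$, $x_{ij}$ with $i\in\{1,2\},j\in\{1,2,3\}$, $p_{abc}$ with $a,b,c\in\{1,2\}$) is defined by $-u_1\bm{x}_1+D^{(3)}\bm{x}_2=\bm{0}$, $-u_2\bm{x}_2+D^{(1)}\bm{x}_3=\bm{0}$, $-u_3\bm{x}_3-(D^{(2)})^{\dagger}\bm{x}_1=\bm{0}$, $u_2u_3+\det D^{(1)}=0$, $u_3u_1+\det D^{(2)}=0$, $u_1u_2+\det D^{(3)}=0$, where $\bm{x}_j=(x_{1j},x_{2j})^t$, $M^\dagger$ is the adjugate, $D^{(1)}_{ij}=p_{1ij}x_{21}-p_{2ij}x_{11}$, $D^{(2)}_{ij}=p_{i1j}x_{22}-p_{i2j}x_{12}$, $D^{(3)}_{ij}=p_{ij1}x_{23}-p_{ij2}x_{13}$,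 $D^{(k)}$ has rows $(-D^{(k)}_{12},D^{(k)}_{11})$, $(-D^{(k)}_{22},D^{(k)}_{21})$. The cluster variety of type $C_2$, $X_{\mathsf{C}_2}$, is the affine scheme in the $13$-dimensional affine space with coordinates $\theta_{12},\theta_{23},\theta_{31},\theta_1,\theta_2,\theta_3,A_{12},A_{23},A_{31},A_1,A_2,A_3,\lambda$ defined by the nine equations $\theta_i\theta_j=A_{ij}\theta_{ij}+A_{jk}A_kA_{ki}$, $\theta_{ki}\theta_{ij}=A_i\theta_i^2+\lambda A_{jk}\theta_i+A_jA_{jk}^2A_k$, $\theta_i\theta_{jk}=A_{ij}A_j\theta_j+\lambda A_{ki}A_{ij}+A_kA_{ki}\theta_k$ for $(i,j,k)\in\{(1,2,3),(2,3,1),(3,1,2)\}$ (indices of $A_{\bullet\bullet},\theta_{\bullet\bullet}$ read as $12,23,31$). *)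

theory Defs
  imports Main
begin

text \<open>2x2 matrices over a commutative ring, stored as (m11, m12, m21, m22).\<close>

type_synonym 'a mat2 = "'a \<times> 'a \<times> 'a \<times> 'a"

definition mulv2 :: "'a::comm_ring_1 mat2 \<Rightarrow> 'a \<times> 'a \<Rightarrow> 'a \<times> 'a" where
  "mulv2 M v = (case M of (a, b, c, d) \<Rightarrow> case v of (x, y) \<Rightarrow> (a * x + b * y, c * x + d * y))"

definition det2 :: "'a::comm_ring_1 mat2 \<Rightarrow> 'a" where
  "det2 M = (case M of (a, b, c, d) \<Rightarrow> a * d - b * c)"

definition adj2 :: "'a::comm_ring_1 mat2 \<Rightarrow> 'a mat2" where
  "adj2 M = (case M of (a, b, c, d) \<Rightarrow> (d, - b, - c, a))"

definition Dmat :: "'a::comm_ring_1 \<Rightarrow> 'a \<Rightarrow> 'a \<Rightarrow> 'a \<Rightarrow> 'a mat2" where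
  "Dmat d11 d12 d21 d22 = (- d12, d11, - d22, d21)"

text \<open>Points of the affine scheme H^13_A in A^17 with values in a commutative ring.
  p is indexed by a b c \<in> {1,2}.\<close>
definition H13 :: "'a::comm_ring_1 \<Rightarrow> 'a \<Rightarrow> 'a \<Rightarrow> 'a \<Rightarrow> 'a \<Rightarrow> 'a \<Rightarrow> 'a \<Rightarrow> 'a \<Rightarrow> 'a
    \<Rightarrow> (nat \<Rightarrow> nat \<Rightarrow> nat \<Rightarrow> 'a) \<Rightarrow> bool" where
  "H13 u1 u2 u3 x11 x21 x12 x22 x13 x23 p \<longleftrightarrow>
    (let xv1 = (x11, x21); xv2 = (x12, x22); xv3 = (x13, x23);
         D1 = Dmat (p 1 1 1 * x21 - p 2 1 1 * x11) (p 1 1 2 * x21 - p 2 1 2 * x11)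
                   (p 1 2 1 * x21 - p 2 2 1 * x11) (p 1 2 2 * x21 - p 2 2 2 * x11);
         D2 = Dmat (p 1 1 1 * x22 - p 1 2 1 * x12) (p 1 1 2 * x22 - p 1 2 2 * x12)
                   (p 2 1 1 * x22 - p 2 2 1 * x12) (p 2 1 2 * x22 - p 2 2 2 * x12);
         D3 = Dmat (p 1 1 1 * x23 - p 1 1 2 * x13) (p 1 2 1 * x23 - p 1 2 2 * x13)
                   (p 2 1 1 * x23 - p 2 1 2 * x13) (p 2 2 1 * x23 - p 2 2 2 * x13)
     in (case mulv2 D3 xv2 of (a, b) \<Rightarrow> (- u1 * fst xv1 + a, - u1 * snd xv1 + b)) = (0, 0)
      \<and> (case mulv2 D1 xv3 of (a, b) \<Rightarrow> (- u2 * fst xv2 + a, - u2 * snd xv2 + b)) = (0, 0)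
      \<and> (case mulv2 (adj2 D2) xv1 of (a, b) \<Rightarrow> (- u3 * fst xv3 - a, - u3 * snd xv3 - b)) = (0, 0)
      \<and> u2 * u3 + det2 D1 = 0
      \<and> u3 * u1 + det2 D2 = 0
      \<and> u1 * u2 + det2 D3 = 0)"

definition C2rel :: "'a::comm_ring_1 \<Rightarrow> 'a \<Rightarrow> 'a \<Rightarrow> 'a \<Rightarrow> 'a \<Rightarrow> 'a \<Rightarrow> 'a \<Rightarrow> 'a \<Rightarrow> 'a
    \<Rightarrow> 'a \<Rightarrow> 'a \<Rightarrow> 'a \<Rightarrow> 'a \<Rightarrow> bool" where
  "C2rel ti tj tk tij tjk tki Ai Aj Ak Aij Ajk Aki lam \<longleftrightarrow>
     ti * tj = Aij * tij + Ajk * Ak * Aki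
   \<and> tki * tij = Ai * ti ^ 2 + lam * Ajk * ti + Aj * Ajk ^ 2 * Ak
   \<and> ti * tjk = Aij * Aj * tj + lam * Aki * Aij + Ak * Aki * tk"

definition XC2 :: "'a::comm_ring_1 \<Rightarrow> 'a \<Rightarrow> 'a \<Rightarrow> 'a \<Rightarrow> 'a \<Rightarrow> 'a \<Rightarrow> 'a \<Rightarrow> 'a \<Rightarrow> 'a
    \<Rightarrow> 'a \<Rightarrow> 'a \<Rightarrow> 'a \<Rightarrow> 'a \<Rightarrow> bool" where
  "XC2 t12 t23 t31 t1 t2 t3 A12 A23 A31 A1 A2 A3 lam \<longleftrightarrow>
     C2rel t1 t2 t3 t12 t23 t31 A1 A2 A3 A12 A23 A31 lam
   \<and> C2rel t2 t3 t1 t23 t31 t12 A2 A3 A1 A23 A31 A12 lam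
   \<and> C2rel t3 t1 t2 t31 t12 t23 A3 A1 A2 A31 A12 A23 lam"

definition pC2 :: "'a::comm_ring_1 \<Rightarrow> 'a \<Rightarrow> 'a \<Rightarrow> 'a \<Rightarrow> nat \<Rightarrow> nat \<Rightarrow> nat \<Rightarrow> 'a" where
  "pC2 A1 A2 A3 lam a b c =
     (if (a, b, c) = (1, 1, 1) then 1
      else if (a, b, c) = (1, 2, 1) then 0
      else if (a, b, c) = (1, 1, 2) then 0
      else if (a, b, c) = (2, 1, 1) then 0
      else if (a, b, c) = (2, 1, 2) then - A1
      else if (a, b, c) = (2, 2, 1) then - A2
      else if (a, b, c) = (1, 2, 2) then - A3
      else if (a, b, c) = (2, 2, 2) then lam
      else 0)"

end

theory Submission
  imports Defs
begin

text \<open>Setting p111 = 1 and p121 = p112 = p211 = 0 turns every entry of the three matrices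
  D^(k) into a cluster monomial or binomial. Each of the nine defining equations of H^13_A
  (the six components of the three vector equations and the three determinant equations)
  then becomes, after moving terms across, exactly one of the nine exchange relations of
  X_{C_2}: the vector equations give the first and third relations of each cyclic triple,
  the determinant equations the second ones.\<close>

definition Dmat1 :: "(nat \<Rightarrow> nat \<Rightarrow> nat \<Rightarrow> 'a::comm_ring_1) \<Rightarrow> 'a \<Rightarrow> 'a \<Rightarrow> 'a mat2" where
  "Dmat1 p x11 x21 = Dmat (p 1 1 1 * x21 - p 2 1 1 * x11) (p 1 1 2 * x21 - p 2 1 2 * x11)
                          (p 1 2 1 * x21 - p 2 2 1 * x11) (p 1 2 2 * x21 - p 2 2 2 * x11)"

definition Dmat2 :: "(nat \<Rightarrow> nat \<Rightarrow> nat \<Rightarrow> 'a::comm_ring_1) \<Rightarrow> 'a \<Rightarrow> 'a \<Rightarrow> 'a mat2" where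
  "Dmat2 p x12 x22 = Dmat (p 1 1 1 * x22 - p 1 2 1 * x12) (p 1 1 2 * x22 - p 1 2 2 * x12)
                          (p 2 1 1 * x22 - p 2 2 1 * x12) (p 2 1 2 * x22 - p 2 2 2 * x12)"

definition Dmat3 :: "(nat \<Rightarrow> nat \<Rightarrow> nat \<Rightarrow> 'a::comm_ring_1) \<Rightarrow> 'a \<Rightarrow> 'a \<Rightarrow> 'a mat2" where
  "Dmat3 p x13 x23 = Dmat (p 1 1 1 * x23 - p 1 1 2 * x13) (p 1 2 1 * x23 - p 1 2 2 * x13)
                          (p 2 1 1 * x23 - p 2 1 2 * x13) (p 2 2 1 * x23 - p 2 2 2 * x13)"

lemma H13_iff_Dmat:
  "H13 u1 u2 u3 x11 x21 x12 x22 x13 x23 p \<longleftrightarrow>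
     mulv2 (Dmat3 p x13 x23) (x12, x22) = (u1 * x11, u1 * x21)
   \<and> mulv2 (Dmat1 p x11 x21) (x13, x23) = (u2 * x12, u2 * x22)
   \<and> mulv2 (adj2 (Dmat2 p x12 x22)) (x11, x21) = (- (u3 * x13), - (u3 * x23))
   \<and> u2 * u3 + det2 (Dmat1 p x11 x21) = 0
   \<and> u3 * u1 + det2 (Dmat2 p x12 x22) = 0
   \<and> u1 * u2 + det2 (Dmat3 p x13 x23) = 0"
proof -
  have shift: "(- (u * x) + a = 0) \<longleftrightarrow> a = u * x" "(- (u * x) - a = 0) \<longleftrightarrow> a = - (u * x)"
    for u x a :: 'a
    by (auto simp: algebra_simps)
  show ?thesis
    unfolding H13_def Let_def Dmat1_def Dmat2_def Dmat3_def
    by (simp only: fst_conv snd_conv split_beta prod_eq_iff shift mult_minus_left)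
qed

lemma Dmat1_pC2: "Dmat1 (pC2 A1 A2 A3 lam) A12 t3 = (- (A1 * A12), t3, A3 * t3 + lam * A12, A2 * A12)"
  by (simp add: Dmat1_def Dmat_def pC2_def)

lemma Dmat2_pC2: "Dmat2 (pC2 A1 A2 A3 lam) A23 t1 = (- (A3 * A23), t1, A1 * t1 + lam * A23, A2 * A23)"
  by (simp add: Dmat2_def Dmat_def pC2_def)

lemma Dmat3_pC2: "Dmat3 (pC2 A1 A2 A3 lam) A31 t2 = (- (A3 * A31), t2, A2 * t2 + lam * A31, A1 * A31)"
  by (simp add: Dmat3_def Dmat_def pC2_def)

lemma Dmat3_equation_pC2_iff:
  "mulv2 (Dmat3 (pC2 A1 A2 A3 lam) A31 t2) (A23, t1) = (t12 * A12, t12 * t3) \<longleftrightarrow>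
     t1 * t2 = A12 * t12 + A23 * A3 * A31
   \<and> t3 * t12 = A31 * A1 * t1 + lam * A23 * A31 + A2 * A23 * t2"
  by (auto simp: Dmat3_pC2 mulv2_def algebra_simps)

lemma Dmat1_equation_pC2_iff:
  "mulv2 (Dmat1 (pC2 A1 A2 A3 lam) A12 t3) (A31, t2) = (t23 * A23, t23 * t1) \<longleftrightarrow>
     t2 * t3 = A23 * t23 + A31 * A1 * A12
   \<and> t1 * t23 = A12 * A2 * t2 + lam * A31 * A12 + A3 * A31 * t3"
  by (auto simp: Dmat1_pC2 mulv2_def algebra_simps)

lemma adj2_Dmat2_equation_pC2_iff:
  "mulv2 (adj2 (Dmat2 (pC2 A1 A2 A3 lam) A23 t1)) (A12, t3) = (- (t31 * A31), - (t31 * t2)) \<longleftrightarrow>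
     t3 * t1 = A31 * t31 + A12 * A2 * A23
   \<and> t2 * t31 = A23 * A3 * t3 + lam * A12 * A23 + A1 * A12 * t1"
  by (auto simp: Dmat2_pC2 adj2_def mulv2_def algebra_simps)

lemma det2_Dmat1_equation_pC2_iff:
  "t23 * t31 + det2 (Dmat1 (pC2 A1 A2 A3 lam) A12 t3) = 0 \<longleftrightarrow>
     t23 * t31 = A3 * t3\<^sup>2 + lam * A12 * t3 + A1 * A12\<^sup>2 * A2"
  by (auto simp: Dmat1_pC2 det2_def algebra_simps power2_eq_square)

lemma det2_Dmat2_equation_pC2_iff:
  "t31 * t12 + det2 (Dmat2 (pC2 A1 A2 A3 lam) A23 t1) = 0 \<longleftrightarrow>
     t31 * t12 = A1 * t1\<^sup>2 + lam * A23 * t1 + A2 * A23\<^sup>2 * A3"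
  by (auto simp: Dmat2_pC2 det2_def algebra_simps power2_eq_square)

lemma det2_Dmat3_equation_pC2_iff:
  "t12 * t23 + det2 (Dmat3 (pC2 A1 A2 A3 lam) A31 t2) = 0 \<longleftrightarrow>
     t12 * t23 = A2 * t2\<^sup>2 + lam * A31 * t2 + A3 * A31\<^sup>2 * A1"
  by (auto simp: Dmat3_pC2 det2_def algebra_simps power2_eq_square)

theorem proposition7p2:
  fixes t12 t23 t31 t1 t2 t3 A12 A23 A31 A1 A2 A3 lam :: "'a::comm_ring_1"
  shows "H13 t12 t23 t31 A12 t3 A23 t1 A31 t2 (pC2 A1 A2 A3 lam)
         \<longleftrightarrow> XC2 t12 t23 t31 t1 t2 t3 A12 A23 A31 A1 A2 A3 lam"
  unfolding H13_iff_Dmat Dmat3_equation_pC2_iff Dmat1_equation_pC2_iff adj2_Dmat2_equation_pC2_iff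
    det2_Dmat1_equation_pC2_iff det2_Dmat2_equation_pC2_iff det2_Dmat3_equation_pC2_iff
    XC2_def C2rel_def
  by blast

end
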